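(* Consider the linear regression $X_{n+1}=\theta\phi_n+\varepsilon_{n+1}$, $n\ge0$, with $\theta\in\mathbb{R}$, where $(\phi_n)_{n\ge0}$ is an i.i.d. sequence of real random variables, $(\varepsilon_n)_{n\ge1}$ is an identically distributed sequence with mean $0$ and variance $\sigma^2>0$, and for each $n\ge0$, $\varepsilon_{n+1}$ is independent of $\sigma(\phi_0,\dots,\phi_n,\varepsilon_1,\dots,\varepsilon_n)$. Let $\hat\theta_n=\frac{\sum_{k=1}^n\phi_{k-1}X_k}{\sum_{k=1}^n\phi_{k-1}^2}$ be the least-squares estimator. Let $H(t)=\log\mathbb{E}[\exp(t\phi_n^2)]$ and $L(t)=\log\mathbb{E}[\exp(t\varepsilon_n^2)]$. Assume $L$ is finite on $[0,c]$ for some $c>0$ and let $I(x)=\sup_{0\le t\le c}\{xt-L(t)\}$. Then for all $n\ge1$, $x>0$, $y>0$, $$\mathbb{P}(|\hat\theta_n-\theta|\ge x)\le 2\inf_{p>1}\exp\left(\frac{n}{p}H\left(-\frac{(p-1)x^2}{2\sigma^2(1+y)}\right)\right)+\exp\left(-nI\left(\frac{\sigma^2y}{n}\right)\right).$$ *)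

theory Defs
  imports "HOL-Probability.Probability"
begin

definition regX :: "real \<Rightarrow> (nat \<Rightarrow> 'a \<Rightarrow> real) \<Rightarrow> (nat \<Rightarrow> 'a \<Rightarrow> real) \<Rightarrow> nat \<Rightarrow> 'a \<Rightarrow> real" where
  "regX \<theta> \<phi> \<epsilon> k \<omega> = \<theta> * \<phi> (k - 1) \<omega> + \<epsilon> k \<omega>"

text \<open>Least-squares estimator (Isabelle convention: division by 0 gives 0).\<close>
definition lse :: "real \<Rightarrow> (nat \<Rightarrow> 'a \<Rightarrow> real) \<Rightarrow> (nat \<Rightarrow> 'a \<Rightarrow> real) \<Rightarrow> nat \<Rightarrow> 'a \<Rightarrow> real" where
  "lse \<theta> \<phi> \<epsilon> n \<omega> =
     (\<Sum>k=1..n. \<phi> (k - 1) \<omega> * regX \<theta> \<phi> \<epsilon> k \<omega>) / (\<Sum>k=1..n. (\<phi> (k - 1) \<omega>)\<^sup>2)"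

definition rv_events :: "'a measure \<Rightarrow> ('a \<Rightarrow> real) \<Rightarrow> 'a set set" where
  "rv_events M f = {f -` A \<inter> space M | A. A \<in> sets borel}"

definition logmgf_sq :: "'a measure \<Rightarrow> ('a \<Rightarrow> real) \<Rightarrow> real \<Rightarrow> real" where
  "logmgf_sq M f t = ln (integral\<^sup>L M (\<lambda>\<omega>. exp (t * (f \<omega>)\<^sup>2)))"

end

theory Submission imports Defs begin

(*
  Write S_n = sum phi_(k-1)^2, M_n = sum phi_(k-1) eps_k,
  Q_n = sum phi_(k-1)^2 eps_k^2 and E_n = sum eps_k^2, so that lse - theta = M_n / S_n.

  1. exp (l M_n - l^2/2 (Q_n + sigma^2 S_n)) has expectation at most 1 (a self-normalised
     supermartingale), because exp (z - z^2/2) <= 1 + z + z^2/2 and eps_(k+1) is independent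
     of the past with mean 0 and variance sigma^2.
  2. On {x S_n <= +-M_n, E_n <= y sigma^2} we have Q_n <= S_n E_n, so for a suitable l the exponent
     above dominates x^2 S_n / (2 sigma^2 (1+y)); a Hoelder-type bound that mixes this
     supermartingale with exp (t S_n), whose expectation is H(t)^n by the i.i.d. assumption,
     bounds the probability of that event by exp (n/p H(t)).
  3. The event {E_n >= y sigma^2} is controlled by a Chernoff bound, E[exp (t E_n)] = L(t)^n.
  The theorem follows by a union bound over the three events.
*)

text \<open>The quadratic upper bound for the Gaussian-type exponential; it drives the supermartingale
  property of step 1.\<close>
lemma exp_minus_half_square_le: fixes z :: real shows "exp (z - z\<^sup>2/2) \<le> 1 + z + z\<^sup>2/2"
proof -
  define k where "k x = (1 + x + x\<^sup>2/2) * exp (x\<^sup>2/2 - x)" for x :: real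
  have pos: "0 < 1 + x/2 + x\<^sup>2/2" for x :: real
  proof -
    have "0 \<le> (x + 1/2)\<^sup>2" by simp
    then show ?thesis by (simp add: power2_eq_square algebra_simps)
  qed
  have deriv: "(k has_real_derivative (exp (x\<^sup>2/2 - x) * (x * (1 + x/2 + x\<^sup>2/2)))) (at x)" for x
    unfolding k_def
    by (rule derivative_eq_intros refl | simp)+ (simp add: algebra_simps power2_eq_square power3_eq_cube)
  text \<open>k decreases on the negative and increases on the positive half-line, so k is at least k 0 = 1.\<close>
  have "k 0 \<le> k z"
  proof (cases "z \<ge> 0")
    case True
    show ?thesis
    proof (rule DERIV_nonneg_imp_nondecreasing[OF True])
      fix t :: real assume "0 \<le> t" "t \<le> z"
      then show "\<exists>y. (k has_real_derivative y) (at t) \<and> 0 \<le> y"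
        using deriv[of t] pos[of t] by (intro exI[of _ "exp (t\<^sup>2/2 - t) * (t * (1 + t/2 + t\<^sup>2/2))"]) auto
    qed
  next
    case False
    show ?thesis
      by (rule deriv_nonpos_imp_antimono[of z 0 k, OF deriv])
         (use False pos in \<open>auto intro!: mult_nonneg_nonpos less_imp_le simp: mult_le_0_iff\<close>)
  qed
  then have "1 \<le> (1 + z + z\<^sup>2/2) * exp (z\<^sup>2/2 - z)" by (simp add: k_def)
  then have "exp (z - z\<^sup>2/2) \<le> exp (z - z\<^sup>2/2) * ((1 + z + z\<^sup>2/2) * exp (z\<^sup>2/2 - z))"
    by simp
  also have "\<dots> = 1 + z + z\<^sup>2/2" by (simp add: mult_exp_exp)
  finally show ?thesis .
qed

text \<open>For nonnegative terms a sum of products is bounded by the product of the sums;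
  this gives Q_n \<le> S_n E_n.\<close>
lemma sum_mult_le_mult_sum:
  fixes a b :: "'i \<Rightarrow> real"
  assumes "\<And>k. 0 \<le> a k" "\<And>k. 0 \<le> b k" and "finite A"
  shows "(\<Sum>k\<in>A. a k * b k) \<le> (\<Sum>k\<in>A. a k) * (\<Sum>k\<in>A. b k)"
proof -
  have "(\<Sum>k\<in>A. a k * b k) \<le> (\<Sum>k\<in>A. a k * (\<Sum>j\<in>A. b j))"
    using assms by (intro sum_mono mult_left_mono member_le_sum) auto
  also have "\<dots> = (\<Sum>k\<in>A. a k) * (\<Sum>k\<in>A. b k)" by (simp add: sum_distrib_right)
  finally show ?thesis .
qed

text \<open>If P \<le> exp (-a f t) for every t in a nonempty T, then P \<le> exp (-a sup f); this passes from
  the pointwise Chernoff bounds to the rate function.\<close>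
lemma le_exp_neg_SUP:
  fixes P a :: real and f :: "real \<Rightarrow> real"
  assumes "T \<noteq> {}" and "a > 0" and "0 \<le> P" and bound: "\<And>t. t \<in> T \<Longrightarrow> P \<le> exp (- a * f t)"
  shows "P \<le> exp (- a * (SUP t\<in>T. f t))"
proof (cases "P = 0")
  case False
  then have P: "P > 0" using \<open>0 \<le> P\<close> by simp
  have "f t \<le> - ln P / a" if "t \<in> T" for t
  proof -
    have "ln P \<le> - a * f t"
      using bound[OF that] P by (metis exp_le_cancel_iff exp_ln)
    then show ?thesis using \<open>a > 0\<close> by (simp add: field_simps)
  qed
  then have "(SUP t\<in>T. f t) \<le> - ln P / a" by (intro cSUP_least \<open>T \<noteq> {}\<close>)
  then have "ln P \<le> - a * (SUP t\<in>T. f t)" using \<open>a > 0\<close> by (simp add: field_simps)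
  then show ?thesis using P by (metis exp_le_cancel_iff exp_ln)
qed simp

context prob_space
begin

lemma integral_exp_pos:
  fixes f :: "'a \<Rightarrow> real"
  assumes "integrable M (\<lambda>\<omega>. exp (f \<omega>))"
  shows "0 < (\<integral>\<omega>. exp (f \<omega>) \<partial>M)"
  using integral_nonneg_AE[of "\<lambda>\<omega>. exp (f \<omega>)" M] integral_nonneg_eq_0_iff_AE[OF assms]
  by (simp add: order_less_le)

lemma measure_le_exp_mix:
  fixes u v :: "'a \<Rightarrow> real"
  assumes A: "A \<in> events" and [measurable]: "u \<in> borel_measurable M" "v \<in> borel_measurable M"
    and w: "0 \<le> w" "w \<le> 1"
    and mgf_u: "(\<integral>\<^sup>+\<omega>. ennreal (exp (u \<omega>)) \<partial>M) \<le> ennreal (exp a)"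
    and mgf_v: "(\<integral>\<^sup>+\<omega>. ennreal (exp (v \<omega>)) \<partial>M) \<le> ennreal (exp b)"
    and on_A: "\<And>\<omega>. \<omega> \<in> A \<Longrightarrow> 0 \<le> w * u \<omega> + (1 - w) * v \<omega>"
  shows "prob A \<le> exp (w * a + (1 - w) * b)"
proof -
  define C where "C = exp (w * a + (1 - w) * b)"
  define cu cv where "cu = C * (w * exp (- a))" and "cv = C * ((1 - w) * exp (- b))"
  have cu: "0 \<le> cu" and cv: "0 \<le> cv" using w by (auto simp: cu_def cv_def C_def)
  have ptw: "1 \<le> cu * exp (u \<omega>) + cv * exp (v \<omega>)" if "\<omega> \<in> A" for \<omega>
  proof -
    have "- (w * a + (1 - w) * b) \<le> (1 - w) * (v \<omega> - b) + w * (u \<omega> - a)"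
      using on_A[OF that] by (simp add: algebra_simps)
    then have "1 \<le> C * exp ((1 - w) * (v \<omega> - b) + w * (u \<omega> - a))"
      by (simp add: C_def mult_exp_exp)
    also have "exp ((1 - w) * (v \<omega> - b) + w * (u \<omega> - a))
        \<le> (1 - w) * exp (v \<omega> - b) + w * exp (u \<omega> - a)"
      using convex_onD[OF exp_convex w, of "v \<omega> - b" "u \<omega> - a"] by simp
    finally have "1 \<le> C * ((1 - w) * exp (v \<omega> - b) + w * exp (u \<omega> - a))"
      by (simp add: C_def)
    then show ?thesis by (simp add: cu_def cv_def exp_diff exp_minus field_simps)
  qed
  have "emeasure M A = (\<integral>\<^sup>+\<omega>. indicator A \<omega> \<partial>M)" using A by simp
  also have "\<dots> \<le> (\<integral>\<^sup>+\<omega>. ennreal cu * ennreal (exp (u \<omega>)) + ennreal cv * ennreal (exp (v \<omega>)) \<partial>M)"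
  proof (intro nn_integral_mono)
    fix \<omega>
    show "indicator A \<omega> \<le> ennreal cu * ennreal (exp (u \<omega>)) + ennreal cv * ennreal (exp (v \<omega>))"
    proof (cases "\<omega> \<in> A")
      case True
      then have "ennreal 1 \<le> ennreal (cu * exp (u \<omega>) + cv * exp (v \<omega>))" by (intro ennreal_leI ptw)
      then show ?thesis using True cu cv by (simp add: ennreal_mult)
    qed simp
  qed
  also have "\<dots> = ennreal cu * (\<integral>\<^sup>+\<omega>. ennreal (exp (u \<omega>)) \<partial>M) + ennreal cv * (\<integral>\<^sup>+\<omega>. ennreal (exp (v \<omega>)) \<partial>M)"
    by (simp add: nn_integral_add nn_integral_cmult)
  also have "\<dots> \<le> ennreal cu * ennreal (exp a) + ennreal cv * ennreal (exp b)"
    by (intro add_mono mult_left_mono mgf_u mgf_v) auto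
  also have "\<dots> = ennreal (cu * exp a + cv * exp b)"
    using cu cv by (simp add: ennreal_mult)
  also have "cu * exp a + cv * exp b = C"
    by (simp add: cu_def cv_def exp_minus field_simps)
  finally show ?thesis by (simp add: emeasure_eq_measure C_def)
qed

lemma measure_ge_le_exp_moment:
  fixes Z :: "'a \<Rightarrow> real"
  assumes [measurable]: "Z \<in> borel_measurable M" and "0 \<le> t" and "0 \<le> B"
    and mgf: "(\<integral>\<^sup>+\<omega>. ennreal (exp (t * Z \<omega>)) \<partial>M) \<le> ennreal B"
  shows "prob {\<omega>\<in>space M. a \<le> Z \<omega>} \<le> exp (- t * a) * B"
proof -
  have ptw: "indicator {\<omega>\<in>space M. a \<le> Z \<omega>} \<omega> \<le> ennreal (exp (- t * a)) * ennreal (exp (t * Z \<omega>))" for \<omega>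
  proof (cases "a \<le> Z \<omega>")
    case True
    then have "1 \<le> exp (- t * a) * exp (t * Z \<omega>)"
      using \<open>0 \<le> t\<close> by (simp add: mult_exp_exp mult_left_mono)
    then show ?thesis by (simp add: ennreal_mult[symmetric] indicator_def)
  qed simp
  have "emeasure M {\<omega>\<in>space M. a \<le> Z \<omega>} = (\<integral>\<^sup>+\<omega>. indicator {\<omega>\<in>space M. a \<le> Z \<omega>} \<omega> \<partial>M)"
    by simp
  also have "\<dots> \<le> (\<integral>\<^sup>+\<omega>. ennreal (exp (- t * a)) * ennreal (exp (t * Z \<omega>)) \<partial>M)"
    by (intro nn_integral_mono ptw)
  also have "\<dots> \<le> ennreal (exp (- t * a)) * ennreal B"
    by (simp add: nn_integral_cmult mult_left_mono mgf)
  finally have "emeasure M {\<omega>\<in>space M. a \<le> Z \<omega>} \<le> ennreal (exp (- t * a)) * ennreal B" .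
  then show ?thesis
    using \<open>0 \<le> B\<close> by (simp add: emeasure_eq_measure ennreal_mult[symmetric])
qed

lemma prob_le_union3:
  assumes "B \<subseteq> A1 \<union> A2 \<union> A3" and "A1 \<in> events" "A2 \<in> events" "A3 \<in> events"
  shows "prob B \<le> prob A1 + prob A2 + prob A3"
proof -
  have "prob B \<le> prob (A1 \<union> A2 \<union> A3)" using assms by (intro finite_measure_mono) auto
  also have "\<dots> \<le> prob (A1 \<union> A2) + prob A3" using assms by (intro measure_Un_le) auto
  also have "prob (A1 \<union> A2) \<le> prob A1 + prob A2" using assms by (intro measure_Un_le)
  finally show ?thesis by simp
qed

lemma subalgebra_sigma:
  assumes "G \<subseteq> events"
  shows "subalgebra M (sigma (space M) G)"
proof -
  have "G \<subseteq> Pow (space M)" using assms sets.sets_into_space by blast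
  then show ?thesis
    using assms by (simp add: subalgebra_def sets_measure_of space_measure_of sets.sigma_sets_subset)
qed

lemma distr_pair_of_indep_sigma:
  fixes e :: "'a \<Rightarrow> real"
  assumes G: "G \<subseteq> events" and Y: "Y \<in> measurable (sigma (space M) G) N"
    and e: "e \<in> borel_measurable M"
    and indep: "indep_set (sigma_sets (space M) (rv_events M e)) (sigma_sets (space M) G)"
  shows "distr M N Y \<Otimes>\<^sub>M distr M borel e = distr M (N \<Otimes>\<^sub>M borel) (\<lambda>\<omega>. (Y \<omega>, e \<omega>))"
proof -
  have G_space: "G \<subseteq> Pow (space M)" using G sets.sets_into_space by blast
  have YM: "Y \<in> measurable M N" using subalgebra_sigma[OF G] Y by (rule measurable_from_subalg)
  have Ye: "(\<lambda>\<omega>. (Y \<omega>, e \<omega>)) \<in> measurable M (N \<Otimes>\<^sub>M borel)" using YM e by (rule measurable_Pair)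
  have prod: "prob ((Y -` A \<inter> space M) \<inter> (e -` B \<inter> space M)) = prob (Y -` A \<inter> space M) * prob (e -` B \<inter> space M)"
    if A: "A \<in> sets N" and B: "B \<in> sets (borel :: real measure)" for A B
  proof -
    have a: "Y -` A \<inter> space M \<in> sigma_sets (space M) G"
      using measurable_sets[OF Y A] G_space by (simp add: sets_measure_of space_measure_of)
    have b: "e -` B \<inter> space M \<in> sigma_sets (space M) (rv_events M e)"
      using B unfolding rv_events_def by blast
    show ?thesis using indep_setD[OF indep b a] by (metis Int_commute mult.commute)
  qed
  interpret Y: prob_space "distr M N Y" using YM by (rule prob_space_distr)
  interpret e: prob_space "distr M borel e" using e by (rule prob_space_distr)
  show ?thesis
  proof (rule pair_measure_eqI)
    fix A B assume A: "A \<in> sets (distr M N Y)" and B: "B \<in> sets (distr M borel e)"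
    have "emeasure (distr M (N \<Otimes>\<^sub>M borel) (\<lambda>\<omega>. (Y \<omega>, e \<omega>))) (A \<times> B)
        = emeasure M ((Y -` A \<inter> space M) \<inter> (e -` B \<inter> space M))"
      using A B by (subst emeasure_distr[OF Ye]) (auto intro!: arg_cong[where f="emeasure M"])
    also have "\<dots> = emeasure (distr M N Y) A * emeasure (distr M borel e) B"
      using prod[of A B] A B YM e
      by (simp add: emeasure_distr emeasure_eq_measure ennreal_mult)
    finally show "emeasure (distr M N Y) A * emeasure (distr M borel e) B
        = emeasure (distr M (N \<Otimes>\<^sub>M borel) (\<lambda>\<omega>. (Y \<omega>, e \<omega>))) (A \<times> B)" by simp
  qed (auto intro: Y.sigma_finite_measure e.sigma_finite_measure)
qed

text \<open>Integrating a function of (Y, e) for such a pair splits into iterated integrals against the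
  two laws; this is the conditional expectation step used in both recursions below.\<close>
lemma nn_integral_indep_pair:
  fixes e :: "'a \<Rightarrow> real"
  assumes G: "G \<subseteq> events" and Y: "Y \<in> measurable (sigma (space M) G) N"
    and e: "e \<in> borel_measurable M"
    and indep: "indep_set (sigma_sets (space M) (rv_events M e)) (sigma_sets (space M) G)"
    and h: "h \<in> borel_measurable (N \<Otimes>\<^sub>M borel)"
  shows "(\<integral>\<^sup>+\<omega>. h (Y \<omega>, e \<omega>) \<partial>M) = (\<integral>\<^sup>+u. \<integral>\<^sup>+v. h (u, v) \<partial>distr M borel e \<partial>distr M N Y)"
proof -
  have law: "distr M N Y \<Otimes>\<^sub>M distr M borel e = distr M (N \<Otimes>\<^sub>M borel) (\<lambda>\<omega>. (Y \<omega>, e \<omega>))"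
    by (rule distr_pair_of_indep_sigma[OF G Y e indep])
  have YM: "Y \<in> measurable M N" using subalgebra_sigma[OF G] Y by (rule measurable_from_subalg)
  interpret e: prob_space "distr M borel e" using e by (rule prob_space_distr)
  have "(\<integral>\<^sup>+\<omega>. h (Y \<omega>, e \<omega>) \<partial>M) = (\<integral>\<^sup>+z. h z \<partial>distr M (N \<Otimes>\<^sub>M borel) (\<lambda>\<omega>. (Y \<omega>, e \<omega>)))"
    using h YM e by (subst nn_integral_distr) auto
  also have "\<dots> = (\<integral>\<^sup>+u. \<integral>\<^sup>+v. h (u, v) \<partial>distr M borel e \<partial>distr M N Y)"
  proof -
    have "h \<in> borel_measurable (distr M N Y \<Otimes>\<^sub>M distr M borel e)"
      using h by (simp cong: measurable_cong_sets)
    from e.nn_integral_fst[OF this] show ?thesis unfolding law[symmetric] by simp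
  qed
  finally show ?thesis .
qed

end

section \<open>The regression model\<close>

locale regression = prob_space M for M :: "'a measure" +
  fixes \<phi> \<epsilon> :: "nat \<Rightarrow> 'a \<Rightarrow> real" and \<sigma>2 :: real
  assumes phi_rv: "\<And>n. \<phi> n \<in> borel_measurable M"
    and phi_indep: "indep_vars (\<lambda>_. borel) \<phi> UNIV"
    and phi_id: "\<And>n. distr M borel (\<phi> n) = distr M borel (\<phi> 0)"
    and eps_rv: "\<And>n. \<epsilon> n \<in> borel_measurable M"
    and eps_id: "\<And>n. n \<ge> 1 \<Longrightarrow> distr M borel (\<epsilon> n) = distr M borel (\<epsilon> 1)"
    and eps_int: "\<And>n. n \<ge> 1 \<Longrightarrow> integrable M (\<epsilon> n)"
    and eps_int2: "\<And>n. n \<ge> 1 \<Longrightarrow> integrable M (\<lambda>\<omega>. (\<epsilon> n \<omega>)\<^sup>2)"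
    and eps_mean: "\<And>n. n \<ge> 1 \<Longrightarrow> expectation (\<epsilon> n) = 0"
    and eps_var: "\<And>n. n \<ge> 1 \<Longrightarrow> variance (\<epsilon> n) = \<sigma>2"
    and sig_pos: "\<sigma>2 > 0"
    and eps_indep: "\<And>n. indep_set
          (sigma_sets (space M) (rv_events M (\<epsilon> (Suc n))))
          (sigma_sets (space M) ((\<Union>i\<in>{..n}. rv_events M (\<phi> i)) \<union> (\<Union>i\<in>{1..n}. rv_events M (\<epsilon> i))))"
begin

declare phi_rv[measurable] eps_rv[measurable]

definition past_events :: "nat \<Rightarrow> 'a set set" where
  "past_events m = (\<Union>i\<in>{..m}. rv_events M (\<phi> i)) \<union> (\<Union>i\<in>{1..m}. rv_events M (\<epsilon> i))"

definition past :: "nat \<Rightarrow> 'a measure" where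
  "past m = sigma (space M) (past_events m)"

lemma past_events_sets: "past_events m \<subseteq> events"
proof -
  have "rv_events M f \<subseteq> events" if "f \<in> borel_measurable M" for f
    using that unfolding rv_events_def by (auto intro: measurable_sets)
  then show ?thesis unfolding past_events_def using phi_rv eps_rv by blast
qed

lemma past_events_space: "past_events m \<subseteq> Pow (space M)"
  using past_events_sets sets.sets_into_space by blast

lemma space_past[simp]: "space (past m) = space M"
  unfolding past_def using past_events_space by (rule space_measure_of)

lemma sets_past: "sets (past m) = sigma_sets (space M) (past_events m)"
  unfolding past_def using past_events_space by (rule sets_measure_of)

lemma measurable_past:
  assumes "rv_events M f \<subseteq> past_events m"
  shows "f \<in> borel_measurable (past m)"
proof (rule measurableI)
  fix A :: "real set" assume "A \<in> sets borel"
  then have "f -` A \<inter> space M \<in> rv_events M f" unfolding rv_events_def by blast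
  then show "f -` A \<inter> space (past m) \<in> sets (past m)"
    using assms by (auto simp: sets_past)
qed auto

lemma phi_past: "i \<le> m \<Longrightarrow> \<phi> i \<in> borel_measurable (past m)"
  by (rule measurable_past) (auto simp: past_events_def)

lemma eps_past: "1 \<le> i \<Longrightarrow> i \<le> m \<Longrightarrow> \<epsilon> i \<in> borel_measurable (past m)"
  by (rule measurable_past) (auto simp: past_events_def)

lemma subalgebra_past: "subalgebra M (past m)"
  unfolding past_def by (rule subalgebra_sigma[OF past_events_sets])

lemma nn_integral_next_noise:
  assumes "Y \<in> measurable (past m) N" and "h \<in> borel_measurable (N \<Otimes>\<^sub>M borel)"
  shows "(\<integral>\<^sup>+\<omega>. h (Y \<omega>, \<epsilon> (Suc m) \<omega>) \<partial>M)
       = (\<integral>\<^sup>+u. \<integral>\<^sup>+e. h (u, e) \<partial>distr M borel (\<epsilon> (Suc m)) \<partial>distr M N Y)"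
  using nn_integral_indep_pair[OF past_events_sets _ eps_rv _ assms(2)] assms(1) eps_indep[of m]
  by (simp add: past_def past_events_def)

definition sumsq_phi :: "nat \<Rightarrow> 'a \<Rightarrow> real" where
  "sumsq_phi m \<omega> = (\<Sum>k=1..m. (\<phi> (k - 1) \<omega>)\<^sup>2)"

definition mart :: "nat \<Rightarrow> 'a \<Rightarrow> real" where
  "mart m \<omega> = (\<Sum>k=1..m. \<phi> (k - 1) \<omega> * \<epsilon> k \<omega>)"

definition qvar :: "nat \<Rightarrow> 'a \<Rightarrow> real" where
  "qvar m \<omega> = (\<Sum>k=1..m. (\<phi> (k - 1) \<omega>)\<^sup>2 * (\<epsilon> k \<omega>)\<^sup>2)"

definition sumsq_eps :: "nat \<Rightarrow> 'a \<Rightarrow> real" where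
  "sumsq_eps m \<omega> = (\<Sum>k=1..m. (\<epsilon> k \<omega>)\<^sup>2)"

definition expmart :: "real \<Rightarrow> nat \<Rightarrow> 'a \<Rightarrow> real" where
  "expmart l m \<omega> = exp (l * mart m \<omega> - l\<^sup>2/2 * (qvar m \<omega> + \<sigma>2 * sumsq_phi m \<omega>))"

lemma sums_past:
  "sumsq_phi m \<in> borel_measurable (past m)" "mart m \<in> borel_measurable (past m)"
  "qvar m \<in> borel_measurable (past m)" "sumsq_eps m \<in> borel_measurable (past m)"
  unfolding sumsq_phi_def mart_def qvar_def sumsq_eps_def using phi_past eps_past
  by (auto intro!: borel_measurable_sum borel_measurable_times borel_measurable_power)

lemma expmart_past: "expmart l m \<in> borel_measurable (past m)"
  unfolding expmart_def using sums_past by measurable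

lemma sums_measurable[measurable]:
  "sumsq_phi m \<in> borel_measurable M" "mart m \<in> borel_measurable M"
  "qvar m \<in> borel_measurable M" "sumsq_eps m \<in> borel_measurable M"
  "expmart l m \<in> borel_measurable M"
  using measurable_from_subalg[OF subalgebra_past] sums_past expmart_past by blast+

lemma expmart_Suc:
  "expmart l (Suc m) \<omega> = expmart l m \<omega> *
     exp (l * \<phi> m \<omega> * \<epsilon> (Suc m) \<omega> - l\<^sup>2/2 * ((\<phi> m \<omega>)\<^sup>2 * (\<epsilon> (Suc m) \<omega>)\<^sup>2 + \<sigma>2 * (\<phi> m \<omega>)\<^sup>2))"
  unfolding expmart_def mart_def qvar_def sumsq_phi_def by (simp add: mult_exp_exp algebra_simps)

text \<open>One step of the supermartingale: for a fixed value u of the regressor the new factor has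
  expectation at most 1; this uses exactly mean 0 and variance sigma2 of the noise.\<close>
lemma noise_factor_le_1:
  assumes k: "k \<ge> 1"
  shows "(\<integral>\<^sup>+e. ennreal (exp (l * u * e - l\<^sup>2/2 * (u\<^sup>2 * e\<^sup>2 + \<sigma>2 * u\<^sup>2))) \<partial>distr M borel (\<epsilon> k)) \<le> 1"
proof -
  define c where "c = l\<^sup>2 * \<sigma>2 * u\<^sup>2 / 2"
  define q where "q e = exp (- c) * (1 + l * u * e + (l * u)\<^sup>2/2 * e\<^sup>2)" for e
  have le_q: "exp (l * u * e - l\<^sup>2/2 * (u\<^sup>2 * e\<^sup>2 + \<sigma>2 * u\<^sup>2)) \<le> q e" for e
  proof -
    have "exp (l * u * e - l\<^sup>2/2 * (u\<^sup>2 * e\<^sup>2 + \<sigma>2 * u\<^sup>2)) = exp (l * u * e - (l * u * e)\<^sup>2/2) * exp (- c)"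
      unfolding c_def by (simp add: mult_exp_exp power_mult_distrib algebra_simps)
    also have "\<dots> \<le> (1 + l * u * e + (l * u * e)\<^sup>2/2) * exp (- c)"
      by (intro mult_right_mono exp_minus_half_square_le) auto
    finally show ?thesis by (simp add: q_def power_mult_distrib algebra_simps)
  qed
  have q_nonneg: "0 \<le> q e" for e by (rule order_trans[OF _ le_q]) simp
  have second_moment: "expectation (\<lambda>\<omega>. (\<epsilon> k \<omega>)\<^sup>2) = \<sigma>2"
    using eps_var[OF k] eps_mean[OF k] by simp
  have "(\<integral>\<^sup>+e. ennreal (exp (l * u * e - l\<^sup>2/2 * (u\<^sup>2 * e\<^sup>2 + \<sigma>2 * u\<^sup>2))) \<partial>distr M borel (\<epsilon> k))
      \<le> (\<integral>\<^sup>+e. ennreal (q e) \<partial>distr M borel (\<epsilon> k))"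
    by (intro nn_integral_mono ennreal_leI le_q)
  also have "\<dots> = (\<integral>\<^sup>+\<omega>. ennreal (q (\<epsilon> k \<omega>)) \<partial>M)"
    by (subst nn_integral_distr) (auto simp: q_def)
  also have "\<dots> = ennreal (\<integral>\<omega>. q (\<epsilon> k \<omega>) \<partial>M)"
    using eps_int[OF k] eps_int2[OF k] q_nonneg by (intro nn_integral_eq_integral) (auto simp: q_def)
  also have "(\<integral>\<omega>. q (\<epsilon> k \<omega>) \<partial>M) = exp (- c) * (1 + c)"
    using eps_int[OF k] eps_int2[OF k] eps_mean[OF k] second_moment
    by (simp add: q_def c_def integral_add prob_space power_mult_distrib)
  also have "ennreal (exp (- c) * (1 + c)) \<le> 1"
  proof -
    have "exp (- c) * (1 + c) \<le> exp (- c) * exp c"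
      by (intro mult_left_mono exp_ge_add_one_self) auto
    then show ?thesis by (simp add: mult_exp_exp)
  qed
  finally show ?thesis .
qed

lemma expmart_le_1: "(\<integral>\<^sup>+\<omega>. ennreal (expmart l m \<omega>) \<partial>M) \<le> 1"
proof (induction m)
  case 0
  then show ?case by (simp add: expmart_def mart_def qvar_def sumsq_phi_def emeasure_space_1)
next
  case (Suc m)
  define Y where "Y \<omega> = (expmart l m \<omega>, \<phi> m \<omega>)" for \<omega>
  define h where "h z = ennreal (fst (fst z)) *
      ennreal (exp (l * snd (fst z) * snd z - l\<^sup>2/2 * ((snd (fst z))\<^sup>2 * (snd z)\<^sup>2 + \<sigma>2 * (snd (fst z))\<^sup>2)))"
    for z :: "(real \<times> real) \<times> real"
  have Y: "Y \<in> measurable (past m) (borel \<Otimes>\<^sub>M borel)"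
    unfolding Y_def using expmart_past phi_past[of m m] by (intro measurable_Pair) auto
  have "(\<integral>\<^sup>+\<omega>. ennreal (expmart l (Suc m) \<omega>) \<partial>M) = (\<integral>\<^sup>+\<omega>. h (Y \<omega>, \<epsilon> (Suc m) \<omega>) \<partial>M)"
    unfolding expmart_Suc h_def Y_def
    by (intro nn_integral_cong) (simp add: ennreal_mult expmart_def)
  also have "\<dots> = (\<integral>\<^sup>+v. \<integral>\<^sup>+e. h (v, e) \<partial>distr M borel (\<epsilon> (Suc m)) \<partial>distr M (borel \<Otimes>\<^sub>M borel) Y)"
    by (rule nn_integral_next_noise[OF Y]) (simp add: h_def)
  also have "\<dots> \<le> (\<integral>\<^sup>+v. ennreal (fst v) \<partial>distr M (borel \<Otimes>\<^sub>M borel) Y)"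
  proof (intro nn_integral_mono)
    fix v :: "real \<times> real"
    have "(\<integral>\<^sup>+e. h (v, e) \<partial>distr M borel (\<epsilon> (Suc m))) = ennreal (fst v) *
        (\<integral>\<^sup>+e. ennreal (exp (l * snd v * e - l\<^sup>2/2 * ((snd v)\<^sup>2 * e\<^sup>2 + \<sigma>2 * (snd v)\<^sup>2))) \<partial>distr M borel (\<epsilon> (Suc m)))"
      unfolding h_def fst_conv snd_conv by (subst nn_integral_cmult[symmetric]) auto
    also have "\<dots> \<le> ennreal (fst v) * 1"
      by (intro mult_left_mono noise_factor_le_1) auto
    finally show "(\<integral>\<^sup>+e. h (v, e) \<partial>distr M borel (\<epsilon> (Suc m))) \<le> ennreal (fst v)" by simp
  qed
  also have "\<dots> = (\<integral>\<^sup>+\<omega>. ennreal (expmart l m \<omega>) \<partial>M)"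
    using measurable_from_subalg[OF subalgebra_past Y] by (subst nn_integral_distr) (auto simp: Y_def)
  finally show ?case using Suc.IH by simp
qed

lemma sumsq_eps_mgf:
  "(\<integral>\<^sup>+\<omega>. ennreal (exp (t * sumsq_eps m \<omega>)) \<partial>M) = (\<integral>\<^sup>+\<omega>. ennreal (exp (t * (\<epsilon> 1 \<omega>)\<^sup>2)) \<partial>M) ^ m"
proof (induction m)
  case 0
  then show ?case by (simp add: sumsq_eps_def emeasure_space_1)
next
  case (Suc m)
  define C where "C = (\<integral>\<^sup>+\<omega>. ennreal (exp (t * (\<epsilon> 1 \<omega>)\<^sup>2)) \<partial>M)"
  define h where "h z = ennreal (exp (t * fst z)) * ennreal (exp (t * (snd z)\<^sup>2))" for z :: "real \<times> real"
  have next_moment: "(\<integral>\<^sup>+e. ennreal (exp (t * e\<^sup>2)) \<partial>distr M borel (\<epsilon> (Suc m))) = C"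
    unfolding C_def eps_id[of "Suc m", simplified] by (subst nn_integral_distr) auto
  have "(\<integral>\<^sup>+\<omega>. ennreal (exp (t * sumsq_eps (Suc m) \<omega>)) \<partial>M) = (\<integral>\<^sup>+\<omega>. h (sumsq_eps m \<omega>, \<epsilon> (Suc m) \<omega>) \<partial>M)"
    unfolding h_def sumsq_eps_def
    by (intro nn_integral_cong) (simp add: ennreal_mult[symmetric] mult_exp_exp algebra_simps)
  also have "\<dots> = (\<integral>\<^sup>+v. \<integral>\<^sup>+e. h (v, e) \<partial>distr M borel (\<epsilon> (Suc m)) \<partial>distr M borel (sumsq_eps m))"
    by (rule nn_integral_next_noise[OF sums_past(4)]) (simp add: h_def)
  also have "\<dots> = (\<integral>\<^sup>+v. ennreal (exp (t * v)) * C \<partial>distr M borel (sumsq_eps m))"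
  proof (intro nn_integral_cong)
    fix v :: real
    show "(\<integral>\<^sup>+e. h (v, e) \<partial>distr M borel (\<epsilon> (Suc m))) = ennreal (exp (t * v)) * C"
      unfolding h_def fst_conv snd_conv next_moment[symmetric] by (subst nn_integral_cmult[symmetric]) auto
  qed
  also have "\<dots> = (\<integral>\<^sup>+\<omega>. ennreal (exp (t * sumsq_eps m \<omega>)) \<partial>M) * C"
    by (subst nn_integral_multc) (auto simp: nn_integral_distr)
  finally show ?case using Suc.IH by (simp add: C_def mult.commute)
qed

definition phi_mgf :: "real \<Rightarrow> real" where
  "phi_mgf t = (\<integral>\<omega>. exp (t * (\<phi> 0 \<omega>)\<^sup>2) \<partial>M)"

lemma phi_mgf_integrable: "t \<le> 0 \<Longrightarrow> integrable M (\<lambda>\<omega>. exp (t * (\<phi> 0 \<omega>)\<^sup>2))"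
  by (rule integrable_const_bound[where B=1]) (auto intro!: mult_nonpos_nonneg)

lemma phi_mgf_pos: "t \<le> 0 \<Longrightarrow> 0 < phi_mgf t"
  unfolding phi_mgf_def by (rule integral_exp_pos[OF phi_mgf_integrable])

lemma sumsq_phi_mgf:
  assumes "t \<le> 0"
  shows "(\<integral>\<^sup>+\<omega>. ennreal (exp (t * sumsq_phi m \<omega>)) \<partial>M) = ennreal (phi_mgf t ^ m)"
proof -
  define X where "X = (\<lambda>i \<omega>. ennreal (exp (t * (\<phi> i \<omega>)\<^sup>2)))"
  have "indep_vars (\<lambda>_. borel) (\<lambda>i. (\<lambda>x. ennreal (exp (t * x\<^sup>2))) \<circ> \<phi> i) {..<m}"
    by (rule indep_vars_compose[OF indep_vars_subset[OF phi_indep]]) auto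
  then have indep: "indep_vars (\<lambda>_. borel) X {..<m}" by (simp add: X_def o_def)
  have shift: "sumsq_phi m \<omega> = (\<Sum>i<m. (\<phi> i \<omega>)\<^sup>2)" for \<omega>
    unfolding sumsq_phi_def by (induction m) auto
  have each: "(\<integral>\<^sup>+\<omega>. X i \<omega> \<partial>M) = ennreal (phi_mgf t)" for i
  proof -
    have "(\<integral>\<^sup>+\<omega>. X i \<omega> \<partial>M) = (\<integral>\<^sup>+x. ennreal (exp (t * x\<^sup>2)) \<partial>distr M borel (\<phi> i))"
      unfolding X_def by (subst nn_integral_distr) auto
    also have "\<dots> = (\<integral>\<^sup>+\<omega>. ennreal (exp (t * (\<phi> 0 \<omega>)\<^sup>2)) \<partial>M)"
      unfolding phi_id[of i] by (subst nn_integral_distr) auto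
    also have "\<dots> = ennreal (phi_mgf t)"
      unfolding phi_mgf_def using phi_mgf_integrable[OF assms] by (intro nn_integral_eq_integral) auto
    finally show ?thesis .
  qed
  have "(\<integral>\<^sup>+\<omega>. ennreal (exp (t * sumsq_phi m \<omega>)) \<partial>M) = (\<integral>\<^sup>+\<omega>. (\<Prod>i\<in>{..<m}. X i \<omega>) \<partial>M)"
    unfolding shift X_def by (intro nn_integral_cong) (simp add: sum_distrib_left exp_sum prod_ennreal)
  also have "\<dots> = (\<Prod>i\<in>{..<m}. \<integral>\<^sup>+\<omega>. X i \<omega> \<partial>M)"
    by (rule indep_vars_nn_integral[OF _ indep]) (auto simp: X_def)
  also have "\<dots> = ennreal (phi_mgf t ^ m)"
    using phi_mgf_pos[OF assms] by (simp add: each ennreal_power)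
  finally show ?thesis .
qed

text \<open>The estimation error: lse - theta = M_m / S_m, hence a deviation x forces x S_m \<le> |M_m|
  (also when S_m = 0, where M_m = 0 as well).\<close>
lemma lse_deviation:
  assumes "x \<le> \<bar>lse \<theta> \<phi> \<epsilon> m \<omega> - \<theta>\<bar>"
  shows "x * sumsq_phi m \<omega> \<le> \<bar>mart m \<omega>\<bar>"
proof (cases "sumsq_phi m \<omega> = 0")
  case True
  then have "\<forall>k\<in>{1..m}. (\<phi> (k - 1) \<omega>)\<^sup>2 = 0"
    unfolding sumsq_phi_def by (subst sum_nonneg_eq_0_iff[symmetric]) auto
  then show ?thesis using True by (simp add: mart_def)
next
  case False
  then have S: "sumsq_phi m \<omega> > 0"
    using sum_nonneg[of "{1..m}" "\<lambda>k. (\<phi> (k - 1) \<omega>)\<^sup>2"] unfolding sumsq_phi_def by force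
  have "(\<Sum>k=1..m. \<phi> (k - 1) \<omega> * regX \<theta> \<phi> \<epsilon> k \<omega>) = \<theta> * sumsq_phi m \<omega> + mart m \<omega>"
    unfolding regX_def sumsq_phi_def mart_def
    by (simp add: sum.distrib sum_distrib_left power2_eq_square algebra_simps)
  then have "lse \<theta> \<phi> \<epsilon> m \<omega> - \<theta> = mart m \<omega> / sumsq_phi m \<omega>"
    using S unfolding lse_def sumsq_phi_def[symmetric] by (simp add: field_simps)
  then have "x \<le> \<bar>mart m \<omega>\<bar> / sumsq_phi m \<omega>" using assms S by simp
  then show ?thesis using S by (simp add: field_simps)
qed

lemma deviation_events_cover:
  "{\<omega>\<in>space M. x \<le> \<bar>lse \<theta> \<phi> \<epsilon> m \<omega> - \<theta>\<bar>}
     \<subseteq> {\<omega>\<in>space M. x * sumsq_phi m \<omega> \<le> mart m \<omega> \<and> sumsq_eps m \<omega> \<le> y * \<sigma>2}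
       \<union> {\<omega>\<in>space M. x * sumsq_phi m \<omega> \<le> - mart m \<omega> \<and> sumsq_eps m \<omega> \<le> y * \<sigma>2}
       \<union> {\<omega>\<in>space M. y * \<sigma>2 \<le> sumsq_eps m \<omega>}"
  using lse_deviation[of x \<theta> m] by (fastforce simp: abs_le_iff)

lemma expmart_exponent_ge:
  assumes x: "x > 0" and y: "y > 0" and s: "\<bar>s\<bar> = 1"
    and dev: "x * sumsq_phi m \<omega> \<le> s * mart m \<omega>" and energy: "sumsq_eps m \<omega> \<le> y * \<sigma>2"
  defines "l \<equiv> s * x / (\<sigma>2 * (1 + y))"
  shows "x\<^sup>2 / (2 * \<sigma>2 * (1 + y)) * sumsq_phi m \<omega>
       \<le> l * mart m \<omega> - l\<^sup>2/2 * (qvar m \<omega> + \<sigma>2 * sumsq_phi m \<omega>)"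
proof -
  define S where "S = sumsq_phi m \<omega>"
  define a where "a = \<sigma>2 * (1 + y)"
  have a: "0 < a" using sig_pos y by (simp add: a_def)
  have K: "x\<^sup>2 / (2 * \<sigma>2 * (1 + y)) = x\<^sup>2 / (2 * a)" by (simp add: a_def mult.assoc)
  have l: "l = s * x / a" by (simp add: l_def a_def)
  have l2: "l\<^sup>2 = x\<^sup>2 / a\<^sup>2"
    using s unfolding l by (simp add: power_mult_distrib power_divide abs_square_eq_1)
  have S: "0 \<le> S" unfolding S_def sumsq_phi_def by (auto intro!: sum_nonneg)
  have "qvar m \<omega> \<le> S * sumsq_eps m \<omega>"
    unfolding qvar_def S_def sumsq_phi_def sumsq_eps_def by (rule sum_mult_le_mult_sum) auto
  also have "\<dots> \<le> S * (y * \<sigma>2)" by (intro mult_left_mono energy S)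
  finally have "l\<^sup>2/2 * (qvar m \<omega> + \<sigma>2 * S) \<le> l\<^sup>2/2 * (a * S)"
    by (intro mult_left_mono) (auto simp: a_def algebra_simps)
  also have "\<dots> = x\<^sup>2 / (2 * a) * S"
    unfolding l2 using a by (simp add: field_simps power2_eq_square)
  finally have quad: "l\<^sup>2/2 * (qvar m \<omega> + \<sigma>2 * S) \<le> x\<^sup>2 / (2 * a) * S" .
  have "2 * (x\<^sup>2 / (2 * a) * S) = x / a * (x * S)" by (simp add: power2_eq_square)
  also have "\<dots> \<le> x / a * (s * mart m \<omega>)"
    using dev x a unfolding S_def by (intro mult_left_mono) auto
  also have "\<dots> = l * mart m \<omega>" by (simp add: l)
  finally have lin: "2 * (x\<^sup>2 / (2 * a) * S) \<le> l * mart m \<omega>" .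
  show ?thesis unfolding K S_def[symmetric] using quad lin by linarith
qed

lemma one_sided_deviation_bound:
  assumes p: "p > 1" and x: "x > 0" and y: "y > 0" and s: "\<bar>s\<bar> = 1"
  shows "prob {\<omega>\<in>space M. x * sumsq_phi m \<omega> \<le> s * mart m \<omega> \<and> sumsq_eps m \<omega> \<le> y * \<sigma>2}
      \<le> exp (real m / p * ln (phi_mgf (- ((p - 1) * x\<^sup>2 / (2 * \<sigma>2 * (1 + y))))))"
proof -
  define K where "K = x\<^sup>2 / (2 * \<sigma>2 * (1 + y))"
  define t where "t = - ((p - 1) * K)"
  define l where "l = s * x / (\<sigma>2 * (1 + y))"
  define w where "w = (p - 1) / p"
  have t: "t \<le> 0" using p sig_pos y by (simp add: t_def K_def)
  have w: "0 \<le> w" "w \<le> 1" "1 - w = 1 / p" using p by (auto simp: w_def field_simps)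
  have "prob {\<omega>\<in>space M. x * sumsq_phi m \<omega> \<le> s * mart m \<omega> \<and> sumsq_eps m \<omega> \<le> y * \<sigma>2}
      \<le> exp (w * 0 + (1 - w) * (real m * ln (phi_mgf t)))"
  proof (rule measure_le_exp_mix[where u="\<lambda>\<omega>. ln (expmart l m \<omega>)" and v="\<lambda>\<omega>. t * sumsq_phi m \<omega>"])
    show "(\<integral>\<^sup>+\<omega>. ennreal (exp (ln (expmart l m \<omega>))) \<partial>M) \<le> ennreal (exp 0)"
      using expmart_le_1[of l m] by (simp add: expmart_def)
    show "(\<integral>\<^sup>+\<omega>. ennreal (exp (t * sumsq_phi m \<omega>)) \<partial>M) \<le> ennreal (exp (real m * ln (phi_mgf t)))"
      using phi_mgf_pos[OF t] by (simp add: sumsq_phi_mgf[OF t] exp_of_nat_mult)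
    fix \<omega> assume "\<omega> \<in> {\<omega>\<in>space M. x * sumsq_phi m \<omega> \<le> s * mart m \<omega> \<and> sumsq_eps m \<omega> \<le> y * \<sigma>2}"
    then have "K * sumsq_phi m \<omega> \<le> ln (expmart l m \<omega>)"
      using expmart_exponent_ge[OF x y s] by (simp add: K_def l_def expmart_def)
    then have "w * (K * sumsq_phi m \<omega>) \<le> w * ln (expmart l m \<omega>)" by (rule mult_left_mono) (use w in simp)
    moreover have "w * (K * sumsq_phi m \<omega>) + (1 - w) * (t * sumsq_phi m \<omega>) = 0"
      using p by (simp add: w t_def w_def field_simps)
    ultimately show "0 \<le> w * ln (expmart l m \<omega>) + (1 - w) * (t * sumsq_phi m \<omega>)" by linarith
  qed (use w in auto)
  then show ?thesis using w by (simp add: t_def K_def)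
qed

lemma energy_bound:
  assumes t: "t \<ge> 0" and L: "integrable M (\<lambda>\<omega>. exp (t * (\<epsilon> 1 \<omega>)\<^sup>2))" and m: "m \<ge> 1"
  shows "prob {\<omega>\<in>space M. y * \<sigma>2 \<le> sumsq_eps m \<omega>}
     \<le> exp (- real m * (\<sigma>2 * y / real m * t - logmgf_sq M (\<epsilon> 1) t))"
proof -
  define L0 where "L0 = (\<integral>\<omega>. exp (t * (\<epsilon> 1 \<omega>)\<^sup>2) \<partial>M)"
  have L0: "L0 > 0" unfolding L0_def by (rule integral_exp_pos[OF L])
  have "(\<integral>\<^sup>+\<omega>. ennreal (exp (t * (\<epsilon> 1 \<omega>)\<^sup>2)) \<partial>M) = ennreal L0"
    unfolding L0_def using L by (intro nn_integral_eq_integral) auto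
  then have "(\<integral>\<^sup>+\<omega>. ennreal (exp (t * sumsq_eps m \<omega>)) \<partial>M) \<le> ennreal (L0 ^ m)"
    using L0 by (simp add: sumsq_eps_mgf ennreal_power)
  then have "prob {\<omega>\<in>space M. y * \<sigma>2 \<le> sumsq_eps m \<omega>} \<le> exp (- t * (y * \<sigma>2)) * L0 ^ m"
    using L0 by (intro measure_ge_le_exp_moment[OF sums_measurable(4) t]) auto
  also have "exp (- t * (y * \<sigma>2)) * L0 ^ m = exp (- real m * (\<sigma>2 * y / real m * t - logmgf_sq M (\<epsilon> 1) t))"
  proof -
    have "- t * (y * \<sigma>2) + real m * ln L0 = - real m * (\<sigma>2 * y / real m * t - ln L0)"
      using m by (simp add: field_simps)
    moreover have "L0 ^ m = exp (real m * ln L0)" using L0 by (simp add: exp_of_nat_mult)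
    ultimately show ?thesis unfolding logmgf_sq_def L0_def[symmetric] by (simp add: mult_exp_exp)
  qed
  finally show ?thesis .
qed

end

section \<open>The deviation inequality\<close>

theorem corollary5p1:
  fixes M :: "'a measure" and \<phi> \<epsilon> :: "nat \<Rightarrow> 'a \<Rightarrow> real"
    and \<theta> \<sigma>2 c :: real
  assumes P: "prob_space M"
    and phi_rv: "\<And>n. \<phi> n \<in> borel_measurable M"
    and phi_indep: "prob_space.indep_vars M (\<lambda>_. borel) \<phi> UNIV"
    and phi_id: "\<And>n. distr M borel (\<phi> n) = distr M borel (\<phi> 0)"
    and eps_rv: "\<And>n. \<epsilon> n \<in> borel_measurable M"
    and eps_id: "\<And>n. n \<ge> 1 \<Longrightarrow> distr M borel (\<epsilon> n) = distr M borel (\<epsilon> 1)"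
    and eps_int: "\<And>n. n \<ge> 1 \<Longrightarrow> integrable M (\<epsilon> n)"
    and eps_int2: "\<And>n. n \<ge> 1 \<Longrightarrow> integrable M (\<lambda>\<omega>. (\<epsilon> n \<omega>)\<^sup>2)"
    and eps_mean: "\<And>n. n \<ge> 1 \<Longrightarrow> prob_space.expectation M (\<epsilon> n) = 0"
    and eps_var: "\<And>n. n \<ge> 1 \<Longrightarrow> prob_space.variance M (\<epsilon> n) = \<sigma>2"
    and sig_pos: "\<sigma>2 > 0"
    and eps_indep: "\<And>n. prob_space.indep_set M
          (sigma_sets (space M) (rv_events M (\<epsilon> (Suc n))))
          (sigma_sets (space M) ((\<Union>i\<in>{..n}. rv_events M (\<phi> i)) \<union> (\<Union>i\<in>{1..n}. rv_events M (\<epsilon> i))))"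
    and c_pos: "c > 0"
    and L_fin: "\<And>t. t \<in> {0..c} \<Longrightarrow> integrable M (\<lambda>\<omega>. exp (t * (\<epsilon> 1 \<omega>)\<^sup>2))"
    and n_pos: "n \<ge> 1" and x_pos: "x > 0" and y_pos: "y > 0"
  shows "measure M {\<omega> \<in> space M. \<bar>lse \<theta> \<phi> \<epsilon> n \<omega> - \<theta>\<bar> \<ge> x}
     \<le> 2 * (INF p\<in>{1<..}. exp (real n / p *
              logmgf_sq M (\<phi> 0) (- ((p - 1) * x\<^sup>2 / (2 * \<sigma>2 * (1 + y))))))
       + exp (- real n * (SUP t\<in>{0..c}. \<sigma>2 * y / real n * t - logmgf_sq M (\<epsilon> 1) t))"
proof -
  interpret regression M \<phi> \<epsilon> \<sigma>2
    using assms unfolding regression_def regression_axioms_def by blast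
  define A where "A s = {\<omega>\<in>space M. x * sumsq_phi n \<omega> \<le> s * mart n \<omega> \<and> sumsq_eps n \<omega> \<le> y * \<sigma>2}" for s
  define Ev where "Ev = {\<omega>\<in>space M. y * \<sigma>2 \<le> sumsq_eps n \<omega>}"
  define I where "I = (INF p\<in>{1<..}. exp (real n / p *
      logmgf_sq M (\<phi> 0) (- ((p - 1) * x\<^sup>2 / (2 * \<sigma>2 * (1 + y))))))"
  have events: "A s \<in> events" "Ev \<in> events" for s unfolding A_def Ev_def by measurable
  have A: "prob (A s) \<le> I" if "\<bar>s\<bar> = 1" for s
    unfolding I_def A_def logmgf_sq_def phi_mgf_def[symmetric]
    using one_sided_deviation_bound[OF _ x_pos y_pos that] by (intro cINF_greatest) auto
  have Ev: "prob Ev \<le> exp (- real n * (SUP t\<in>{0..c}. \<sigma>2 * y / real n * t - logmgf_sq M (\<epsilon> 1) t))"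
    unfolding Ev_def using c_pos n_pos energy_bound[OF _ L_fin n_pos]
    by (intro le_exp_neg_SUP) auto
  have "prob {\<omega> \<in> space M. \<bar>lse \<theta> \<phi> \<epsilon> n \<omega> - \<theta>\<bar> \<ge> x} \<le> prob (A 1) + prob (A (-1)) + prob Ev"
    using deviation_events_cover[of x \<theta> n y] by (intro prob_le_union3 events) (auto simp: A_def Ev_def)
  then show ?thesis using A[of 1] A[of "-1"] Ev unfolding I_def by simp
qed

end
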